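(* Let $X,Y$ be $\mathfrak{Q}$-preordered $\mathfrak{Q}$-subsets and $g\colon\mathsf{P}^{\dagger}Y\to\mathsf{P}^{\dagger}X$ a $\mathfrak{Q}$-order-preserving map. The following are equivalent: (i) $g$ is a right adjoint in $\mathfrak{Q}\text{-}\mathbf{FOrd}$, i.e. there is a $\mathfrak{Q}$-order-preserving $f\colon\mathsf{P}^{\dagger}X\to\mathsf{P}^{\dagger}Y$ with $f\dashv g$ (a dual $\mathfrak{Q}$-axiality from $X$ to $Y$); (ii) $g$ is a right adjoint between the underlying preordered sets of $\mathsf{P}^{\dagger}Y$ and $\mathsf{P}^{\dagger}X$, and $g(\lambda\circ v)=g\lambda\circ v$ for all $\lambda\in\mathsf{P}^{\dagger}Y$, $q\in\mathfrak{Q}$ and $v\in\mathcal{D}\mathfrak{Q}(q,|\lambda|)$; (iii) $g$ is a right adjoint between the underlying preordered sets of $\mathsf{P}^{\dagger}Y$ and $\mathsf{P}^{\dagger}X$, and $g(\mathsf{y}^{\dagger}_Y y\circ v)=g\mathsf{y}^{\dagger}_Y y\circ v$ for all $y\in Y$, $q\in\mathfrak{Q}$ and $v\in\mathcal{D}\mathfrak{Q}(q,|y|)$.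
   Context: $(\mathfrak{Q},\&,e)$ is a non-trivial unital quantale (complete lattice with associative multiplication with unit $e$ preserving joins in each variable, $\bot<e$), implications $p\& q\le r\iff p\le r/ q\iff q\le p\backslash r$, and $\mathcal{D}\mathfrak{Q}(p,q)=\{u\mid (u/ p)\& p=u=q\&(q\backslash u)\}$. A $\mathfrak{Q}$-subset is a set $X$ with $|\cdot|\colon X\to\mathfrak{Q}$; $\mathbf{1}_q$ is the singleton $\{*\}$ with $|*|=q$, and $v\in\mathcal{D}\mathfrak{Q}(p,q)$ is identified with the $\mathfrak{Q}$-relation from $\mathbf{1}_p$ to $\mathbf{1}_q$ with value $v$. A $\mathfrak{Q}$-relation from $X$ to $Y$ is a map $\phi\colon X\times Y\to\mathfrak{Q}$ with $\phi(x,y)\in\mathcal{D}\mathfrak{Q}(|x|,|y|)$, ordered pointwise; composition $(\psi\circ\phi)(x,z)=\bigvee_y(\psi(y,z)/|y|)\&\phi(x,y)$; $\xi\swarrow\phi$ is the largest $\psi'$ with $\psi'\circ\phi\le\xi$, and $\psi\searrow\xi$ the largest $\phi'$ with $\psi\circ\phi'\le\xi$. $\mathrm{id}_X(x,x)=|x|$, $\bot$ elsewhere. A $\mathfrak{Q}$-preordered $\mathfrak{Q}$-subset is a $\mathfrak{Q}$-subset $X$ with a $\mathfrak{Q}$-relation $1_X^{\natural}$ from $X$ to $X$ with $\mathrm{id}_X\le 1_X^{\natural}$ and $1_X^{\natural}\circ 1_X^{\natural}\le 1_X^{\natural}$; its underlying preorder is $x\le y\iff |x|=|y|$ and $|x|\le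 1_X^{\natural}(x,y)$. A $\mathfrak{Q}$-order-preserving map $f$ satisfies $|fx|=|x|$ and $1_X^{\natural}(x,x')\le 1_Y^{\natural}(fx,fx')$; $f\le g$ means $|x|\le 1_Y^{\natural}(fx,gx)$ for all $x$; $f\dashv g$ means $1_X\le gf$ and $fg\le 1_Y$; $\mathfrak{Q}\text{-}\mathbf{FOrd}$ is the category of $\mathfrak{Q}$-preordered $\mathfrak{Q}$-subsets and $\mathfrak{Q}$-order-preserving maps. The dual $\mathfrak{Q}$-powerset $\mathsf{P}^{\dagger}X$ consists of the potential upper $\mathfrak{Q}$-subsets, i.e. $\mathfrak{Q}$-relations $\lambda$ from some $\mathbf{1}_q$ to $X$ with $1_X^{\natural}\circ\lambda\le\lambda$, with $|\lambda|=q$ and $\mathfrak{Q}$-preorder $1_{\mathsf{P}^{\dagger}X}^{\natural}(\lambda,\lambda')=\lambda'\searrow\lambda$ (so its underlying order is the reverse of the pointwise order among elements of equal membership). The co-Yoneda embedding $\mathsf{y}^{\dagger}_X\colon X\to\mathsf{P}^{\dagger}X$ sends $x$ to $1_X^{\natural}(x,-)$, a $\mathfrak{Q}$-relation from $\mathbf{1}_{|x|}$ to $X$. *)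

theory Defs
  imports Main
begin

class unital_quantale = complete_lattice + monoid_mult +
  assumes mult_Sup_distl: "a * Sup B = (SUP b\<in>B. a * b)"
      and mult_Sup_distr: "Sup A * b = (SUP a\<in>A. a * b)"

text \<open>Implications: p * q \<le> r iff p \<le> rdiv r q iff q \<le> ldiv p r.\<close>

definition rdiv :: "'q::unital_quantale \<Rightarrow> 'q \<Rightarrow> 'q" where
  "rdiv r q = Sup {p. p * q \<le> r}"

definition ldiv :: "'q::unital_quantale \<Rightarrow> 'q \<Rightarrow> 'q" where
  "ldiv p r = Sup {q. p * q \<le> r}"

definition DQ :: "'q::unital_quantale \<Rightarrow> 'q \<Rightarrow> 'q set" where
  "DQ p q = {u. rdiv u p * p = u \<and> q * ldiv q u = u}"

text \<open>A Q-subset with a binary Q-relation on it: (carrier, membership |.|, relation).\<close>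
type_synonym ('a, 'q) qfset = "'a set \<times> ('a \<Rightarrow> 'q) \<times> ('a \<Rightarrow> 'a \<Rightarrow> 'q)"

definition carr :: "('a, 'q) qfset \<Rightarrow> 'a set" where "carr S = fst S"
definition mem :: "('a, 'q) qfset \<Rightarrow> 'a \<Rightarrow> 'q" where "mem S = fst (snd S)"
definition rel :: "('a, 'q) qfset \<Rightarrow> 'a \<Rightarrow> 'a \<Rightarrow> 'q" where "rel S = snd (snd S)"

definition is_qrel :: "'a set \<Rightarrow> ('a \<Rightarrow> 'q::unital_quantale) \<Rightarrow> 'b set \<Rightarrow> ('b \<Rightarrow> 'q)
    \<Rightarrow> ('a \<Rightarrow> 'b \<Rightarrow> 'q) \<Rightarrow> bool" where
  "is_qrel X mX Y mY phi \<longleftrightarrow> (\<forall>x\<in>X. \<forall>y\<in>Y. phi x y \<in> DQ (mX x) (mY y))"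

definition rcomp :: "'b set \<Rightarrow> ('b \<Rightarrow> 'q::unital_quantale) \<Rightarrow> ('a \<Rightarrow> 'b \<Rightarrow> 'q)
    \<Rightarrow> ('b \<Rightarrow> 'c \<Rightarrow> 'q) \<Rightarrow> ('a \<Rightarrow> 'c \<Rightarrow> 'q)" where
  "rcomp Y mY phi psi = (\<lambda>x z. SUP y\<in>Y. rdiv (psi y z) (mY y) * phi x y)"

definition qpreord :: "('a, 'q::unital_quantale) qfset \<Rightarrow> bool" where
  "qpreord S \<longleftrightarrow> is_qrel (carr S) (mem S) (carr S) (mem S) (rel S)
     \<and> (\<forall>x\<in>carr S. mem S x \<le> rel S x x)
     \<and> (\<forall>x\<in>carr S. \<forall>z\<in>carr S. rcomp (carr S) (mem S) (rel S) (rel S) x z \<le> rel S x z)"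

definition uleq :: "('a, 'q::unital_quantale) qfset \<Rightarrow> 'a \<Rightarrow> 'a \<Rightarrow> bool" where
  "uleq S x y \<longleftrightarrow> mem S x = mem S y \<and> mem S x \<le> rel S x y"

text \<open>An element of P-dagger S is a pair (q, l): a Q-relation l from 1_q to S
  (values outside the carrier are normalised to bot), with 1_S o l \<le> l.\<close>
definition PD_carrier :: "('a, 'q::unital_quantale) qfset \<Rightarrow> ('q \<times> ('a \<Rightarrow> 'q)) set" where
  "PD_carrier S = {(q, l).
      (\<forall>x\<in>carr S. l x \<in> DQ q (mem S x))
    \<and> (\<forall>x. x \<notin> carr S \<longrightarrow> l x = bot)
    \<and> (\<forall>x\<in>carr S. (SUP y\<in>carr S. rdiv (rel S y x) (mem S y) * l y) \<le> l x)}"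

text \<open>l' \<searrow> l : the largest v in DQ(|l|,|l'|) with l' o v \<le> l, where
  (l' o v)(x) = (l'(x) / |l'|) * v. (The set of such v is closed under joins,
  so its join is its largest element.)\<close>
definition PD_rel :: "('a, 'q::unital_quantale) qfset \<Rightarrow> ('q \<times> ('a \<Rightarrow> 'q))
    \<Rightarrow> ('q \<times> ('a \<Rightarrow> 'q)) \<Rightarrow> 'q" where
  "PD_rel S l l' = Sup {v \<in> DQ (fst l) (fst l').
      \<forall>x\<in>carr S. rdiv (snd l' x) (fst l') * v \<le> snd l x}"

definition PD :: "('a, 'q::unital_quantale) qfset \<Rightarrow> ('q \<times> ('a \<Rightarrow> 'q), 'q) qfset" where
  "PD S = (PD_carrier S, fst, PD_rel S)"

text \<open>Composite l o v of l in P-dagger S with v in DQ(q, |l|): a Q-relation from 1_q to S.\<close>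
definition pd_scal :: "('a, 'q::unital_quantale) qfset \<Rightarrow> ('q \<times> ('a \<Rightarrow> 'q)) \<Rightarrow> 'q \<Rightarrow> 'q
    \<Rightarrow> ('q \<times> ('a \<Rightarrow> 'q))" where
  "pd_scal S l q v = (q, \<lambda>x. if x \<in> carr S then rdiv (snd l x) (fst l) * v else bot)"

definition coyoneda :: "('a, 'q::unital_quantale) qfset \<Rightarrow> 'a \<Rightarrow> ('q \<times> ('a \<Rightarrow> 'q))" where
  "coyoneda S y = (mem S y, \<lambda>y'. if y' \<in> carr S then rel S y y' else bot)"

definition qmap :: "('a, 'q::unital_quantale) qfset \<Rightarrow> ('b, 'q) qfset \<Rightarrow> ('a \<Rightarrow> 'b) \<Rightarrow> bool" where
  "qmap S T f \<longleftrightarrow> (\<forall>x\<in>carr S. f x \<in> carr T \<and> mem T (f x) = mem S x)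
     \<and> (\<forall>x\<in>carr S. \<forall>x'\<in>carr S. rel S x x' \<le> rel T (f x) (f x'))"

definition qleq_map :: "('a, 'q::unital_quantale) qfset \<Rightarrow> ('b, 'q) qfset
    \<Rightarrow> ('a \<Rightarrow> 'b) \<Rightarrow> ('a \<Rightarrow> 'b) \<Rightarrow> bool" where
  "qleq_map S T f g \<longleftrightarrow> (\<forall>x\<in>carr S. mem S x \<le> rel T (f x) (g x))"

definition qadjoint :: "('a, 'q::unital_quantale) qfset \<Rightarrow> ('b, 'q) qfset
    \<Rightarrow> ('a \<Rightarrow> 'b) \<Rightarrow> ('b \<Rightarrow> 'a) \<Rightarrow> bool" where
  "qadjoint S T f g \<longleftrightarrow> qleq_map S S (\<lambda>x. x) (\<lambda>x. g (f x)) \<and> qleq_map T T (\<lambda>y. f (g y)) (\<lambda>y. y)"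

definition umono :: "('a, 'q::unital_quantale) qfset \<Rightarrow> ('b, 'q) qfset \<Rightarrow> ('a \<Rightarrow> 'b) \<Rightarrow> bool" where
  "umono S T f \<longleftrightarrow> (\<forall>x\<in>carr S. f x \<in> carr T)
     \<and> (\<forall>x\<in>carr S. \<forall>x'\<in>carr S. uleq S x x' \<longrightarrow> uleq T (f x) (f x'))"

definition uadjoint :: "('a, 'q::unital_quantale) qfset \<Rightarrow> ('b, 'q) qfset
    \<Rightarrow> ('a \<Rightarrow> 'b) \<Rightarrow> ('b \<Rightarrow> 'a) \<Rightarrow> bool" where
  "uadjoint S T f g \<longleftrightarrow> umono S T f \<and> umono T S g
     \<and> (\<forall>x\<in>carr S. uleq S x (g (f x))) \<and> (\<forall>y\<in>carr T. uleq T (f (g y)) y)"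

end

theory Submission
  imports Defs
begin

text \<open>The underlying order of P\<dagger>S is the reverse pointwise order, and every l in P\<dagger>S is the
  pointwise join of the scaled co-Yoneda elements y\<dagger>(y) \<circ> l(y). Pointwise joins are meets in the
  underlying order and are therefore preserved by any right adjoint g; this gives (iii) \<Longrightarrow> (ii).
  Given (ii), the left adjoint f of the underlying orders is Q-order-preserving: with
  r = lam' \<searrow> lam one has lam \<le> lam' \<circ> r, and compatibility of g with \<circ> r turns this into
  f lam \<le> f lam' \<circ> r. Conversely, if f is Q-order-preserving then hom(lam, g mu) = hom(f lam, mu),
  and since an element of P\<dagger>X is determined by the elements below it, g commutes with every \<circ> v.\<close>

subsection \<open>Quantale arithmetic\<close>

lemma mult_right_isotone: "(a::'q::unital_quantale) \<le> b \<Longrightarrow> a * c \<le> b * c"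
  using mult_Sup_distr[of "{a, b}" c] by (simp add: le_iff_sup)

lemma mult_left_isotone: "(a::'q::unital_quantale) \<le> b \<Longrightarrow> c * a \<le> c * b"
  using mult_Sup_distl[of c "{a, b}"] by (simp add: le_iff_sup)

lemma mult_SUP_distl: "(a::'q::unital_quantale) * (SUP i\<in>I. f i) = (SUP i\<in>I. a * f i)"
  by (simp add: mult_Sup_distl image_image)

lemma mult_SUP_distr: "(SUP i\<in>I. f i) * (a::'q::unital_quantale) = (SUP i\<in>I. f i * a)"
  by (simp add: mult_Sup_distr image_image)

lemma rdiv_galois: "(p::'q::unital_quantale) * q \<le> r \<longleftrightarrow> p \<le> rdiv r q"
proof
  show "p * q \<le> r \<Longrightarrow> p \<le> rdiv r q"
    unfolding rdiv_def by (intro Sup_upper) simp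
  assume "p \<le> rdiv r q"
  then have "p * q \<le> rdiv r q * q" by (rule mult_right_isotone)
  also have "\<dots> = (SUP p'\<in>{p'. p' * q \<le> r}. p' * q)"
    unfolding rdiv_def by (rule mult_Sup_distr)
  also have "\<dots> \<le> r" by (rule SUP_least) simp
  finally show "p * q \<le> r" .
qed

lemma ldiv_galois: "(p::'q::unital_quantale) * q \<le> r \<longleftrightarrow> q \<le> ldiv p r"
proof
  show "p * q \<le> r \<Longrightarrow> q \<le> ldiv p r"
    unfolding ldiv_def by (intro Sup_upper) simp
  assume "q \<le> ldiv p r"
  then have "p * q \<le> p * ldiv p r" by (rule mult_left_isotone)
  also have "\<dots> = (SUP q'\<in>{q'. p * q' \<le> r}. p * q')"
    unfolding ldiv_def by (rule mult_Sup_distl)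
  also have "\<dots> \<le> r" by (rule SUP_least) simp
  finally show "p * q \<le> r" .
qed

lemma rdiv_mult_le: "rdiv r q * q \<le> (r::'q::unital_quantale)"
  using rdiv_galois by blast

lemma mult_ldiv_le: "p * ldiv p r \<le> (r::'q::unital_quantale)"
  using ldiv_galois by blast

lemma rdiv_mono: "(r::'q::unital_quantale) \<le> r' \<Longrightarrow> rdiv r q \<le> rdiv r' q"
  by (meson order_trans rdiv_galois rdiv_mult_le)

lemma ldiv_mono: "(r::'q::unital_quantale) \<le> r' \<Longrightarrow> ldiv p r \<le> ldiv p r'"
  by (meson order_trans ldiv_galois mult_ldiv_le)

lemma one_le_rdiv: "(q::'q::unital_quantale) \<le> r \<Longrightarrow> 1 \<le> rdiv r q"
  by (simp flip: rdiv_galois)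

lemma rdiv_mult_eq_mult_ldiv:
  "rdiv a m * m = a \<Longrightarrow> m * ldiv m v = v \<Longrightarrow> rdiv a m * v = (a::'q::unital_quantale) * ldiv m v"
  by (metis mult.assoc)

lemma rdiv_mult_left_mult:
  assumes "rdiv v q * q = v"
  shows "rdiv (c * v) q * q = (c::'q::unital_quantale) * v"
proof (rule order_antisym)
  have "c * rdiv v q * q = c * v" using assms by (simp add: mult.assoc)
  then have "c * rdiv v q \<le> rdiv (c * v) q" by (metis rdiv_galois order_refl)
  then show "c * v \<le> rdiv (c * v) q * q"
    using \<open>c * rdiv v q * q = c * v\<close> mult_right_isotone by metis
qed (rule rdiv_mult_le)

subsection \<open>The sets DQ(p, q)\<close>

lemma DQ_rdiv_mult: "u \<in> DQ p q \<Longrightarrow> rdiv u p * p = u"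
  by (simp add: DQ_def)

lemma DQ_mult_ldiv: "u \<in> DQ p q \<Longrightarrow> q * ldiv q u = u"
  by (simp add: DQ_def)

lemma DQ_I: "(u::'q::unital_quantale) \<le> rdiv u p * p \<Longrightarrow> u \<le> q * ldiv q u \<Longrightarrow> u \<in> DQ p q"
  unfolding DQ_def using rdiv_mult_le[of u p] mult_ldiv_le[of q u] by (auto intro: order_antisym)

lemma DQ_Sup: "U \<subseteq> DQ p q \<Longrightarrow> Sup U \<in> DQ (p::'q::unital_quantale) q"
proof (rule DQ_I)
  assume U: "U \<subseteq> DQ p q"
  show "Sup U \<le> rdiv (Sup U) p * p"
  proof (rule Sup_least)
    fix u assume "u \<in> U"
    then have "u = rdiv u p * p" using U DQ_rdiv_mult[of u p q] by auto
    also have "\<dots> \<le> rdiv (Sup U) p * p"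
      using \<open>u \<in> U\<close> by (intro mult_right_isotone rdiv_mono Sup_upper)
    finally show "u \<le> rdiv (Sup U) p * p" .
  qed
  show "Sup U \<le> q * ldiv q (Sup U)"
  proof (rule Sup_least)
    fix u assume "u \<in> U"
    then have "u = q * ldiv q u" using U DQ_mult_ldiv[of u p q] by auto
    also have "\<dots> \<le> q * ldiv q (Sup U)"
      using \<open>u \<in> U\<close> by (intro mult_left_isotone ldiv_mono Sup_upper)
    finally show "u \<le> q * ldiv q (Sup U)" .
  qed
qed

lemma DQ_refl: "q \<in> DQ q (q::'q::unital_quantale)"
proof (rule DQ_I)
  show "q \<le> rdiv q q * q"
    using mult_right_isotone[OF one_le_rdiv[OF order_refl], of q q] by simp
  have "1 \<le> ldiv q q" by (simp flip: ldiv_galois)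
  then show "q \<le> q * ldiv q q" using mult_left_isotone[of 1 "ldiv q q" q] by simp
qed

lemma rdiv_mult_assoc:
  assumes "v \<in> DQ q m" and "w \<in> DQ p q"
  shows "rdiv (c * v) q * w = (c::'q::unital_quantale) * (rdiv v q * w)"
proof -
  note v = DQ_rdiv_mult[OF assms(1)] and w = DQ_mult_ldiv[OF assms(2)]
  have "rdiv (c * v) q * w = c * v * ldiv q w"
    using rdiv_mult_eq_mult_ldiv[OF rdiv_mult_left_mult[OF v] w] .
  also have "\<dots> = c * (rdiv v q * w)"
    using rdiv_mult_eq_mult_ldiv[OF v w] by (simp add: mult.assoc)
  finally show ?thesis .
qed

lemma DQ_comp: "v \<in> DQ q m \<Longrightarrow> w \<in> DQ p q \<Longrightarrow> rdiv v q * w \<in> DQ p (m::'q::unital_quantale)"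
proof (rule DQ_I)
  assume v: "v \<in> DQ q m" and w: "w \<in> DQ p q"
  show "rdiv v q * w \<le> rdiv (rdiv v q * w) p * p"
    using rdiv_mult_left_mult[OF DQ_rdiv_mult[OF w]] by simp
  have split: "rdiv v q * w = m * (ldiv m v * ldiv q w)"
    using rdiv_mult_eq_mult_ldiv[OF DQ_rdiv_mult[OF v] DQ_mult_ldiv[OF w]] DQ_mult_ldiv[OF v]
    by (metis mult.assoc)
  have "m * (ldiv m v * ldiv q w) \<le> m * ldiv m (m * (ldiv m v * ldiv q w))"
    by (intro mult_left_isotone) (simp flip: ldiv_galois)
  then show "rdiv v q * w \<le> m * ldiv m (rdiv v q * w)"
    by (simp only: split)
qed

subsection \<open>The dual Q-powerset\<close>

lemma PD_simps [simp]: "carr (PD S) = PD_carrier S" "mem (PD S) = fst" "rel (PD S) = PD_rel S"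
  by (simp_all add: PD_def carr_def mem_def rel_def)

lemma PD_carrierI:
  assumes "\<And>x. x \<in> carr S \<Longrightarrow> snd l x \<in> DQ (fst l) (mem S x)"
    and "\<And>x. x \<notin> carr S \<Longrightarrow> snd l x = bot"
    and "\<And>x. x \<in> carr S \<Longrightarrow> (SUP y\<in>carr S. rdiv (rel S y x) (mem S y) * snd l y) \<le> snd l x"
  shows "l \<in> PD_carrier S"
  using assms by (cases l) (auto simp: PD_carrier_def)

lemma PD_carrier_DQ: "l \<in> PD_carrier S \<Longrightarrow> x \<in> carr S \<Longrightarrow> snd l x \<in> DQ (fst l) (mem S x)"
  by (cases l) (auto simp: PD_carrier_def)

lemma PD_carrier_outside: "l \<in> PD_carrier S \<Longrightarrow> x \<notin> carr S \<Longrightarrow> snd l x = bot"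
  by (cases l) (auto simp: PD_carrier_def)

lemma PD_carrier_upper:
  "l \<in> PD_carrier S \<Longrightarrow> x \<in> carr S \<Longrightarrow>
   (SUP y\<in>carr S. rdiv (rel S y x) (mem S y) * snd l y) \<le> snd l x"
  by (cases l) (auto simp: PD_carrier_def)

lemma PD_carrier_eqI:
  assumes "a \<in> PD_carrier S" "b \<in> PD_carrier S" "fst a = fst b"
    and "\<And>x. x \<in> carr S \<Longrightarrow> snd a x = snd b x"
  shows "a = b"
proof -
  have "snd a x = snd b x" for x
    using assms PD_carrier_outside[OF assms(1), of x] PD_carrier_outside[OF assms(2), of x]
    by (cases "x \<in> carr S") simp_all
  then have "snd a = snd b" ..
  then show ?thesis using assms(3) by (simp add: prod_eq_iff)
qed

lemma PD_rel_DQ: "PD_rel S l l' \<in> DQ (fst l) (fst l')"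
  unfolding PD_rel_def by (rule DQ_Sup) auto

lemma le_PD_rel_iff:
  assumes "v \<in> DQ (fst l) (fst l')"
  shows "v \<le> PD_rel S l l' \<longleftrightarrow> (\<forall>x\<in>carr S. rdiv (snd l' x) (fst l') * v \<le> snd l x)"
proof
  let ?V = "{v \<in> DQ (fst l) (fst l'). \<forall>x\<in>carr S. rdiv (snd l' x) (fst l') * v \<le> snd l x}"
  assume "v \<le> PD_rel S l l'"
  show "\<forall>x\<in>carr S. rdiv (snd l' x) (fst l') * v \<le> snd l x"
  proof
    fix x assume x: "x \<in> carr S"
    have "rdiv (snd l' x) (fst l') * v \<le> rdiv (snd l' x) (fst l') * Sup ?V"
      using \<open>v \<le> PD_rel S l l'\<close> unfolding PD_rel_def by (rule mult_left_isotone)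
    also have "\<dots> = (SUP u\<in>?V. rdiv (snd l' x) (fst l') * u)" by (rule mult_Sup_distl)
    also have "\<dots> \<le> snd l x" using x by (intro SUP_least) auto
    finally show "rdiv (snd l' x) (fst l') * v \<le> snd l x" .
  qed
next
  assume "\<forall>x\<in>carr S. rdiv (snd l' x) (fst l') * v \<le> snd l x"
  then show "v \<le> PD_rel S l l'"
    unfolding PD_rel_def using assms by (intro Sup_upper) simp
qed

lemma PD_rel_le: "x \<in> carr S \<Longrightarrow> rdiv (snd l' x) (fst l') * PD_rel S l l' \<le> snd l x"
  using le_PD_rel_iff[of "PD_rel S l l'" l l' S] PD_rel_DQ[of S l l'] by simp

lemma uleq_PD_iff:
  assumes b: "b \<in> PD_carrier S"
  shows "uleq (PD S) a b \<longleftrightarrow> fst a = fst b \<and> (\<forall>x\<in>carr S. snd b x \<le> snd a x)"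
proof -
  have "fst b \<le> PD_rel S a b \<longleftrightarrow> (\<forall>x\<in>carr S. snd b x \<le> snd a x)" if "fst a = fst b"
    using that le_PD_rel_iff[of "fst b" a b S] DQ_refl[of "fst b"]
      DQ_rdiv_mult[OF PD_carrier_DQ[OF b]] by simp
  then show ?thesis by (auto simp: uleq_def)
qed

lemma uleq_PD_refl: "a \<in> PD_carrier S \<Longrightarrow> uleq (PD S) a a"
  by (simp add: uleq_PD_iff)

lemma uleq_PD_trans:
  "b \<in> PD_carrier S \<Longrightarrow> c \<in> PD_carrier S \<Longrightarrow> uleq (PD S) a b \<Longrightarrow> uleq (PD S) b c \<Longrightarrow>
   uleq (PD S) a c"
  by (auto simp: uleq_PD_iff intro: order_trans)

lemma uleq_PD_antisym:
  "a \<in> PD_carrier S \<Longrightarrow> b \<in> PD_carrier S \<Longrightarrow> uleq (PD S) a b \<Longrightarrow> uleq (PD S) b a \<Longrightarrow> a = b"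
  by (rule PD_carrier_eqI) (auto simp: uleq_PD_iff intro: order_antisym)

lemma PD_carrier_eq_if_same_lower_bounds:
  assumes "b \<in> PD_carrier S" "c \<in> PD_carrier S"
    and "\<And>a. a \<in> PD_carrier S \<Longrightarrow> uleq (PD S) a b \<longleftrightarrow> uleq (PD S) a c"
  shows "b = c"
  using assms uleq_PD_refl[of b S] uleq_PD_refl[of c S] by (blast intro: uleq_PD_antisym)

lemma PD_rel_comp_le: "rdiv (PD_rel S b c) (fst b) * PD_rel S a b \<le> PD_rel S a c"
proof -
  have "rdiv (snd c x) (fst c) * (rdiv (PD_rel S b c) (fst b) * PD_rel S a b) \<le> snd a x"
    if x: "x \<in> carr S" for x
  proof -
    have "rdiv (snd c x) (fst c) * rdiv (PD_rel S b c) (fst b) * fst b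
          = rdiv (snd c x) (fst c) * PD_rel S b c"
      using DQ_rdiv_mult[OF PD_rel_DQ[of S b c]] by (simp add: mult.assoc)
    also have "\<dots> \<le> snd b x" by (rule PD_rel_le[OF x])
    finally have "rdiv (snd c x) (fst c) * rdiv (PD_rel S b c) (fst b) \<le> rdiv (snd b x) (fst b)"
      by (simp add: rdiv_galois)
    then have "rdiv (snd c x) (fst c) * rdiv (PD_rel S b c) (fst b) * PD_rel S a b
         \<le> rdiv (snd b x) (fst b) * PD_rel S a b" by (rule mult_right_isotone)
    also have "\<dots> \<le> snd a x" by (rule PD_rel_le[OF x])
    finally show ?thesis by (simp add: mult.assoc)
  qed
  then show ?thesis by (simp add: le_PD_rel_iff DQ_comp[OF PD_rel_DQ PD_rel_DQ])
qed

lemma PD_rel_right_mono: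
  assumes "uleq (PD S) b c"
  shows "PD_rel S a b \<le> PD_rel S a c"
proof -
  have "1 \<le> rdiv (PD_rel S b c) (fst b)" using assms by (auto simp: uleq_def one_le_rdiv)
  then have "1 * PD_rel S a b \<le> rdiv (PD_rel S b c) (fst b) * PD_rel S a b"
    by (rule mult_right_isotone)
  then show ?thesis using PD_rel_comp_le[of S b c a] by simp
qed

lemma PD_rel_left_antimono:
  assumes "uleq (PD S) a b"
  shows "PD_rel S b c \<le> PD_rel S a c"
proof -
  have "rdiv (PD_rel S b c) (fst b) * fst b \<le> rdiv (PD_rel S b c) (fst b) * PD_rel S a b"
    using assms by (intro mult_left_isotone) (auto simp: uleq_def)
  then show ?thesis
    using PD_rel_comp_le[of S b c a] DQ_rdiv_mult[OF PD_rel_DQ[of S b c]] by simp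
qed

subsection \<open>Scalars, co-Yoneda elements and joins in the dual Q-powerset\<close>

lemma pd_scal_simps:
  "fst (pd_scal S l q v) = q"
  "x \<in> carr S \<Longrightarrow> snd (pd_scal S l q v) x = rdiv (snd l x) (fst l) * v"
  by (simp_all add: pd_scal_def)

lemma pd_scal_val:
  assumes "l \<in> PD_carrier S" "v \<in> DQ q (fst l)" "x \<in> carr S"
  shows "snd (pd_scal S l q v) x = snd l x * ldiv (fst l) v"
  using rdiv_mult_eq_mult_ldiv[OF DQ_rdiv_mult[OF PD_carrier_DQ] DQ_mult_ldiv] assms
  by (simp add: pd_scal_simps)

lemma pd_scal_carrier:
  assumes l: "l \<in> PD_carrier S" and v: "v \<in> DQ q (fst l)"
  shows "pd_scal S l q v \<in> PD_carrier S"
proof (rule PD_carrierI)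
  fix x assume x: "x \<in> carr S"
  show "snd (pd_scal S l q v) x \<in> DQ (fst (pd_scal S l q v)) (mem S x)"
    using DQ_comp[OF PD_carrier_DQ[OF l x] v] x by (simp add: pd_scal_simps)
  have "(SUP y\<in>carr S. rdiv (rel S y x) (mem S y) * snd (pd_scal S l q v) y)
      = (SUP y\<in>carr S. rdiv (rel S y x) (mem S y) * snd l y) * ldiv (fst l) v"
    by (simp add: mult_SUP_distr pd_scal_val[OF l v] mult.assoc)
  also have "\<dots> \<le> snd l x * ldiv (fst l) v"
    by (rule mult_right_isotone[OF PD_carrier_upper[OF l x]])
  finally show "(SUP y\<in>carr S. rdiv (rel S y x) (mem S y) * snd (pd_scal S l q v) y)
      \<le> snd (pd_scal S l q v) x"
    using pd_scal_val[OF l v x] by simp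
qed (simp add: pd_scal_def)

lemma uleq_pd_scal_iff:
  assumes "b \<in> PD_carrier S" "r \<in> DQ p (fst b)"
  shows "uleq (PD S) a (pd_scal S b p r) \<longleftrightarrow> fst a = p \<and> r \<le> PD_rel S a b"
proof -
  have "uleq (PD S) a (pd_scal S b p r)
        \<longleftrightarrow> fst a = p \<and> (\<forall>x\<in>carr S. rdiv (snd b x) (fst b) * r \<le> snd a x)"
    by (simp add: uleq_PD_iff[OF pd_scal_carrier[OF assms]] pd_scal_simps)
  also have "\<dots> \<longleftrightarrow> fst a = p \<and> r \<le> PD_rel S a b"
    using le_PD_rel_iff[of r a b S] assms(2) by auto
  finally show ?thesis .
qed

lemma pd_scal_pd_scal:
  assumes "u \<in> DQ p (fst l)" "v \<in> DQ q p"
  shows "pd_scal S (pd_scal S l p u) q v = pd_scal S l q (rdiv u p * v)"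
  by (simp add: pd_scal_def rdiv_mult_assoc[OF assms] fun_eq_iff)

lemma pd_scal_self: "l \<in> PD_carrier S \<Longrightarrow> pd_scal S l (fst l) (fst l) = l"
  by (rule PD_carrier_eqI[OF pd_scal_carrier[OF _ DQ_refl]])
    (simp_all add: pd_scal_simps DQ_rdiv_mult[OF PD_carrier_DQ])

lemma coyoneda_simps:
  "fst (coyoneda S y) = mem S y"
  "x \<in> carr S \<Longrightarrow> snd (coyoneda S y) x = rel S y x"
  by (simp_all add: coyoneda_def)

lemma coyoneda_carrier:
  assumes S: "qpreord S" and y: "y \<in> carr S"
  shows "coyoneda S y \<in> PD_carrier S"
proof (rule PD_carrierI)
  fix x assume x: "x \<in> carr S"
  show "snd (coyoneda S y) x \<in> DQ (fst (coyoneda S y)) (mem S x)"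
    using S x y by (simp add: coyoneda_simps qpreord_def is_qrel_def)
  have "(SUP z\<in>carr S. rdiv (rel S z x) (mem S z) * snd (coyoneda S y) z)
      = rcomp (carr S) (mem S) (rel S) (rel S) y x"
    by (simp add: rcomp_def coyoneda_simps)
  also have "\<dots> \<le> rel S y x" using S x y by (simp add: qpreord_def)
  finally show "(SUP z\<in>carr S. rdiv (rel S z x) (mem S z) * snd (coyoneda S y) z)
      \<le> snd (coyoneda S y) x"
    using x by (simp add: coyoneda_simps)
qed (simp add: coyoneda_def)

lemma PD_carrier_eq_SUP:
  assumes S: "qpreord S" and l: "l \<in> PD_carrier S" and x: "x \<in> carr S"
  shows "snd l x = (SUP y\<in>carr S. rdiv (rel S y x) (mem S y) * snd l y)"
proof (rule order_antisym[OF _ PD_carrier_upper[OF l x]])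
  have "1 \<le> rdiv (rel S x x) (mem S x)"
    using S x by (simp add: qpreord_def one_le_rdiv)
  then have "1 * snd l x \<le> rdiv (rel S x x) (mem S x) * snd l x" by (rule mult_right_isotone)
  also have "\<dots> \<le> (SUP y\<in>carr S. rdiv (rel S y x) (mem S y) * snd l y)"
    using x by (rule SUP_upper)
  finally show "snd l x \<le> (SUP y\<in>carr S. rdiv (rel S y x) (mem S y) * snd l y)" by simp
qed

definition pd_join ::
  "('a, 'q::unital_quantale) qfset \<Rightarrow> 'q \<Rightarrow> 'i set \<Rightarrow> ('i \<Rightarrow> 'q \<times> ('a \<Rightarrow> 'q)) \<Rightarrow> 'q \<times> ('a \<Rightarrow> 'q)"
  where "pd_join S q I mus = (q, \<lambda>x. if x \<in> carr S then SUP i\<in>I. snd (mus i) x else bot)"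

lemma pd_join_simps:
  "fst (pd_join S q I mus) = q"
  "x \<in> carr S \<Longrightarrow> snd (pd_join S q I mus) x = (SUP i\<in>I. snd (mus i) x)"
  by (simp_all add: pd_join_def)

lemma pd_join_cong:
  "(\<And>i. i \<in> I \<Longrightarrow> mus i = nus i) \<Longrightarrow> pd_join S q I mus = pd_join S q I nus"
  by (simp add: pd_join_def fun_eq_iff cong: SUP_cong)

lemma pd_join_carrier:
  assumes mus: "\<And>i. i \<in> I \<Longrightarrow> mus i \<in> PD_carrier S" "\<And>i. i \<in> I \<Longrightarrow> fst (mus i) = q"
  shows "pd_join S q I mus \<in> PD_carrier S"
proof (rule PD_carrierI)
  fix x assume x: "x \<in> carr S"
  show "snd (pd_join S q I mus) x \<in> DQ (fst (pd_join S q I mus)) (mem S x)"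
    using x mus PD_carrier_DQ[OF mus(1)] by (auto simp: pd_join_simps intro!: DQ_Sup)
  have "rdiv (rel S y x) (mem S y) * snd (mus i) y \<le> snd (mus i) x"
    if "y \<in> carr S" "i \<in> I" for y i
    using PD_carrier_upper[OF mus(1) x] that by (meson SUP_le_iff)
  then show "(SUP y\<in>carr S. rdiv (rel S y x) (mem S y) * snd (pd_join S q I mus) y)
      \<le> snd (pd_join S q I mus) x"
    using x by (auto simp: pd_join_simps mult_SUP_distl intro!: SUP_least SUP_upper2)
qed (simp add: pd_join_def)

lemma uleq_pd_join_iff:
  assumes mus: "\<And>i. i \<in> I \<Longrightarrow> mus i \<in> PD_carrier S" "\<And>i. i \<in> I \<Longrightarrow> fst (mus i) = q"
  shows "uleq (PD S) a (pd_join S q I mus) \<longleftrightarrow> fst a = q \<and> (\<forall>i\<in>I. uleq (PD S) a (mus i))"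
  using mus
  by (auto simp: uleq_PD_iff[OF pd_join_carrier[OF mus]] uleq_PD_iff pd_join_simps SUP_le_iff)

lemma pd_scal_pd_join:
  assumes mus: "\<And>i. i \<in> I \<Longrightarrow> mus i \<in> PD_carrier S" "\<And>i. i \<in> I \<Longrightarrow> fst (mus i) = p"
    and v: "v \<in> DQ q p"
  shows "pd_scal S (pd_join S p I mus) q v = pd_join S q I (\<lambda>i. pd_scal S (mus i) q v)"
proof (rule PD_carrier_eqI)
  show "pd_scal S (pd_join S p I mus) q v \<in> PD_carrier S"
    using pd_scal_carrier[OF pd_join_carrier[OF mus]] v by (simp add: pd_join_simps)
  show "pd_join S q I (\<lambda>i. pd_scal S (mus i) q v) \<in> PD_carrier S"
    using mus v by (intro pd_join_carrier) (auto intro: pd_scal_carrier simp: pd_scal_simps)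
  fix x assume x: "x \<in> carr S"
  have v': "v \<in> DQ q (fst (pd_join S p I mus))" using v by (simp add: pd_join_simps)
  have "snd (pd_scal S (pd_join S p I mus) q v) x = (SUP i\<in>I. snd (mus i) x) * ldiv p v"
    using pd_scal_val[OF pd_join_carrier[OF mus] v' x] x by (simp add: pd_join_simps)
  also have "\<dots> = (SUP i\<in>I. snd (pd_scal S (mus i) q v) x)"
    using mus v x by (simp add: mult_SUP_distr pd_scal_val cong: SUP_cong)
  finally show "snd (pd_scal S (pd_join S p I mus) q v) x
      = snd (pd_join S q I (\<lambda>i. pd_scal S (mus i) q v)) x"
    using x by (simp add: pd_join_simps)
qed (simp add: pd_scal_simps pd_join_simps)

lemma PD_carrier_eq_pd_join_coyoneda:
  assumes S: "qpreord S" and l: "l \<in> PD_carrier S"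
  shows "l = pd_join S (fst l) (carr S) (\<lambda>y. pd_scal S (coyoneda S y) (fst l) (snd l y))"
proof (rule PD_carrier_eqI[OF l pd_join_carrier])
  fix y assume y: "y \<in> carr S"
  show "pd_scal S (coyoneda S y) (fst l) (snd l y) \<in> PD_carrier S"
    using pd_scal_carrier[OF coyoneda_carrier[OF S y]] PD_carrier_DQ[OF l y]
    by (simp add: coyoneda_simps)
next
  fix x assume x: "x \<in> carr S"
  show "snd l x = snd (pd_join S (fst l) (carr S) (\<lambda>y. pd_scal S (coyoneda S y) (fst l) (snd l y))) x"
    using PD_carrier_eq_SUP[OF S l x] x
    by (simp add: pd_join_simps pd_scal_simps coyoneda_simps cong: SUP_cong)
qed (simp_all add: pd_scal_simps pd_join_simps)

lemma pd_scal_eq_pd_join_coyoneda: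
  assumes S: "qpreord S" and l: "l \<in> PD_carrier S" and v: "v \<in> DQ q (fst l)"
  shows "pd_scal S l q v
    = pd_join S q (carr S) (\<lambda>y. pd_scal S (coyoneda S y) q (rdiv (snd l y) (fst l) * v))"
proof -
  have "pd_scal S l q v
      = pd_scal S (pd_join S (fst l) (carr S) (\<lambda>y. pd_scal S (coyoneda S y) (fst l) (snd l y))) q v"
    using PD_carrier_eq_pd_join_coyoneda[OF S l] by (rule arg_cong[where f="\<lambda>l'. pd_scal S l' q v"])
  also have "\<dots> = pd_join S q (carr S)
      (\<lambda>y. pd_scal S (pd_scal S (coyoneda S y) (fst l) (snd l y)) q v)"
    using PD_carrier_DQ[OF l] coyoneda_carrier[OF S] v
    by (intro pd_scal_pd_join) (auto intro: pd_scal_carrier simp: pd_scal_simps coyoneda_simps)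
  also have "\<dots> = pd_join S q (carr S) (\<lambda>y. pd_scal S (coyoneda S y) q (rdiv (snd l y) (fst l) * v))"
    using PD_carrier_DQ[OF l] v by (intro pd_join_cong) (simp add: pd_scal_pd_scal coyoneda_simps)
  finally show ?thesis .
qed

subsection \<open>Adjunctions\<close>

lemma qmap_umono: "qmap S T f \<Longrightarrow> umono S T f"
  unfolding qmap_def umono_def uleq_def by (metis order_trans)

lemma qadjoint_iff_uadjoint:
  assumes "qmap S T f" "qmap T S g"
  shows "qadjoint S T f g \<longleftrightarrow> uadjoint S T f g"
  using assms qmap_umono[OF assms(1)] qmap_umono[OF assms(2)]
  by (auto simp: qadjoint_def qleq_map_def uadjoint_def uleq_def qmap_def)

locale pd_adjunction =
  fixes X :: "('a, 'q::unital_quantale) qfset" and Y :: "('b, 'q) qfset"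
    and f :: "'q \<times> ('a \<Rightarrow> 'q) \<Rightarrow> 'q \<times> ('b \<Rightarrow> 'q)"
    and g :: "'q \<times> ('b \<Rightarrow> 'q) \<Rightarrow> 'q \<times> ('a \<Rightarrow> 'q)"
  assumes g_qmap: "qmap (PD Y) (PD X) g"
    and uadjoint: "uadjoint (PD X) (PD Y) f g"
begin

lemma g_carrier: "mu \<in> PD_carrier Y \<Longrightarrow> g mu \<in> PD_carrier X"
  using g_qmap by (simp add: qmap_def)

lemma g_fst: "mu \<in> PD_carrier Y \<Longrightarrow> fst (g mu) = fst mu"
  using g_qmap by (simp add: qmap_def)

lemma f_carrier: "lam \<in> PD_carrier X \<Longrightarrow> f lam \<in> PD_carrier Y"
  using uadjoint by (simp add: uadjoint_def umono_def)

lemma unit: "lam \<in> PD_carrier X \<Longrightarrow> uleq (PD X) lam (g (f lam))"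
  using uadjoint by (simp add: uadjoint_def)

lemma counit: "mu \<in> PD_carrier Y \<Longrightarrow> uleq (PD Y) (f (g mu)) mu"
  using uadjoint by (simp add: uadjoint_def)

lemma f_fst: "lam \<in> PD_carrier X \<Longrightarrow> fst (f lam) = fst lam"
  using unit g_fst f_carrier by (simp add: uleq_def)

lemma f_mono:
  "a \<in> PD_carrier X \<Longrightarrow> b \<in> PD_carrier X \<Longrightarrow> uleq (PD X) a b \<Longrightarrow> uleq (PD Y) (f a) (f b)"
  using uadjoint by (simp add: uadjoint_def umono_def)

lemma g_mono:
  "a \<in> PD_carrier Y \<Longrightarrow> b \<in> PD_carrier Y \<Longrightarrow> uleq (PD Y) a b \<Longrightarrow> uleq (PD X) (g a) (g b)"
  using uadjoint by (simp add: uadjoint_def umono_def)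

lemma galois:
  assumes a: "a \<in> PD_carrier X" and b: "b \<in> PD_carrier Y"
  shows "uleq (PD X) a (g b) \<longleftrightarrow> uleq (PD Y) (f a) b"
proof
  assume "uleq (PD X) a (g b)"
  then have "uleq (PD Y) (f a) (f (g b))" by (rule f_mono[OF a g_carrier[OF b]])
  then show "uleq (PD Y) (f a) b"
    by (rule uleq_PD_trans[OF f_carrier[OF g_carrier[OF b]] b _ counit[OF b]])
next
  assume "uleq (PD Y) (f a) b"
  then have "uleq (PD X) (g (f a)) (g b)" by (rule g_mono[OF f_carrier[OF a] b])
  then show "uleq (PD X) a (g b)"
    by (rule uleq_PD_trans[OF g_carrier[OF f_carrier[OF a]] g_carrier[OF b] unit[OF a]])
qed

lemma g_pd_join:
  assumes mus: "\<And>i. i \<in> I \<Longrightarrow> mus i \<in> PD_carrier Y" "\<And>i. i \<in> I \<Longrightarrow> fst (mus i) = q"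
  shows "g (pd_join Y q I mus) = pd_join X q I (\<lambda>i. g (mus i))"
proof (rule PD_carrier_eq_if_same_lower_bounds)
  show "g (pd_join Y q I mus) \<in> PD_carrier X" by (rule g_carrier[OF pd_join_carrier[OF mus]])
  show "pd_join X q I (\<lambda>i. g (mus i)) \<in> PD_carrier X"
    using mus by (intro pd_join_carrier) (simp_all add: g_carrier g_fst)
  fix a assume a: "a \<in> PD_carrier X"
  have "uleq (PD X) a (g (pd_join Y q I mus)) \<longleftrightarrow> uleq (PD Y) (f a) (pd_join Y q I mus)"
    by (rule galois[OF a pd_join_carrier[OF mus]])
  also have "\<dots> \<longleftrightarrow> fst a = q \<and> (\<forall>i\<in>I. uleq (PD Y) (f a) (mus i))"
    by (simp add: uleq_pd_join_iff[OF mus] f_fst[OF a])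
  also have "\<dots> \<longleftrightarrow> fst a = q \<and> (\<forall>i\<in>I. uleq (PD X) a (g (mus i)))"
    using galois[OF a] mus(1) by auto
  also have "\<dots> \<longleftrightarrow> uleq (PD X) a (pd_join X q I (\<lambda>i. g (mus i)))"
    using mus by (simp add: uleq_pd_join_iff g_carrier g_fst)
  finally show "uleq (PD X) a (g (pd_join Y q I mus))
      \<longleftrightarrow> uleq (PD X) a (pd_join X q I (\<lambda>i. g (mus i)))" .
qed

lemma f_qmap_if_g_pd_scal:
  assumes scal: "\<And>l q v. l \<in> PD_carrier Y \<Longrightarrow> v \<in> DQ q (fst l) \<Longrightarrow>
      g (pd_scal Y l q v) = pd_scal X (g l) q v"
  shows "qmap (PD X) (PD Y) f"
proof -
  have "PD_rel X lam lam' \<le> PD_rel Y (f lam) (f lam')"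
    if lam: "lam \<in> PD_carrier X" and lam': "lam' \<in> PD_carrier X" for lam lam'
  proof -
    define p where "p = fst lam"
    define r where "r = PD_rel X lam lam'"
    define nu where "nu = pd_scal X lam' p r"
    have r: "r \<in> DQ p (fst lam')" unfolding p_def r_def by (rule PD_rel_DQ)
    have nu: "nu \<in> PD_carrier X" unfolding nu_def by (rule pd_scal_carrier[OF lam' r])
    have r_f: "r \<in> DQ p (fst (f lam'))" using r f_fst[OF lam'] by simp
    have r_gf: "r \<in> DQ p (fst (g (f lam')))" using r_f g_fst[OF f_carrier[OF lam']] by simp
    have f_lam': "f lam' \<in> PD_carrier Y" by (rule f_carrier[OF lam'])
    have "uleq (PD X) lam nu"
      unfolding nu_def using uleq_pd_scal_iff[OF lam' r] p_def r_def by simp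
    then have f_lam_nu: "uleq (PD Y) (f lam) (f nu)" by (rule f_mono[OF lam nu])
    have "r \<le> PD_rel X nu lam'"
      using uleq_pd_scal_iff[OF lam' r, of nu] uleq_PD_refl[OF nu] unfolding nu_def by simp
    also have "\<dots> \<le> PD_rel X nu (g (f lam'))" by (rule PD_rel_right_mono[OF unit[OF lam']])
    finally have "uleq (PD X) nu (pd_scal X (g (f lam')) p r)"
      using uleq_pd_scal_iff[OF g_carrier[OF f_lam'] r_gf] by (simp add: nu_def pd_scal_simps)
    then have "uleq (PD X) nu (g (pd_scal Y (f lam') p r))" by (simp add: scal[OF f_lam' r_f])
    then have "uleq (PD Y) (f nu) (pd_scal Y (f lam') p r)"
      using galois[OF nu pd_scal_carrier[OF f_lam' r_f]] by simp
    with f_lam_nu have "uleq (PD Y) (f lam) (pd_scal Y (f lam') p r)"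
      by (rule uleq_PD_trans[OF f_carrier[OF nu] pd_scal_carrier[OF f_lam' r_f]])
    then show ?thesis using uleq_pd_scal_iff[OF f_lam' r_f] r_def by simp
  qed
  then show ?thesis using f_carrier f_fst by (simp add: qmap_def)
qed

lemma PD_rel_g_eq_PD_rel_f:
  assumes f_qmap: "qmap (PD X) (PD Y) f"
    and lam: "lam \<in> PD_carrier X" and mu: "mu \<in> PD_carrier Y"
  shows "PD_rel X lam (g mu) = PD_rel Y (f lam) mu"
proof (rule order_antisym)
  have "PD_rel X lam (g mu) \<le> PD_rel Y (f lam) (f (g mu))"
    using f_qmap lam g_carrier[OF mu] by (simp add: qmap_def)
  also have "\<dots> \<le> PD_rel Y (f lam) mu" by (rule PD_rel_right_mono[OF counit[OF mu]])
  finally show "PD_rel X lam (g mu) \<le> PD_rel Y (f lam) mu" .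
  have "PD_rel Y (f lam) mu \<le> PD_rel X (g (f lam)) (g mu)"
    using g_qmap f_carrier[OF lam] mu by (simp add: qmap_def)
  also have "\<dots> \<le> PD_rel X lam (g mu)" by (rule PD_rel_left_antimono[OF unit[OF lam]])
  finally show "PD_rel Y (f lam) mu \<le> PD_rel X lam (g mu)" .
qed

lemma g_pd_scal_if_f_qmap:
  assumes f_qmap: "qmap (PD X) (PD Y) f"
    and l: "l \<in> PD_carrier Y" and v: "v \<in> DQ q (fst l)"
  shows "g (pd_scal Y l q v) = pd_scal X (g l) q v"
proof (rule PD_carrier_eq_if_same_lower_bounds)
  have v': "v \<in> DQ q (fst (g l))" using v g_fst[OF l] by simp
  show "g (pd_scal Y l q v) \<in> PD_carrier X" by (rule g_carrier[OF pd_scal_carrier[OF l v]])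
  show "pd_scal X (g l) q v \<in> PD_carrier X" by (rule pd_scal_carrier[OF g_carrier[OF l] v'])
  fix a assume a: "a \<in> PD_carrier X"
  have "uleq (PD X) a (g (pd_scal Y l q v)) \<longleftrightarrow> uleq (PD Y) (f a) (pd_scal Y l q v)"
    by (rule galois[OF a pd_scal_carrier[OF l v]])
  also have "\<dots> \<longleftrightarrow> fst a = q \<and> v \<le> PD_rel Y (f a) l"
    by (simp add: uleq_pd_scal_iff[OF l v] f_fst[OF a])
  also have "\<dots> \<longleftrightarrow> fst a = q \<and> v \<le> PD_rel X a (g l)"
    by (simp add: PD_rel_g_eq_PD_rel_f[OF f_qmap a l])
  also have "\<dots> \<longleftrightarrow> uleq (PD X) a (pd_scal X (g l) q v)"
    by (simp add: uleq_pd_scal_iff[OF g_carrier[OF l] v'])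
  finally show "uleq (PD X) a (g (pd_scal Y l q v)) \<longleftrightarrow> uleq (PD X) a (pd_scal X (g l) q v)" .
qed

context
  assumes Y: "qpreord Y"
    and scal_coyoneda: "\<And>y q v. y \<in> carr Y \<Longrightarrow> v \<in> DQ q (mem Y y) \<Longrightarrow>
      g (pd_scal Y (coyoneda Y y) q v) = pd_scal X (g (coyoneda Y y)) q v"
begin

lemma g_pd_scal_eq_pd_join_coyoneda:
  assumes l: "l \<in> PD_carrier Y" and v: "v \<in> DQ q (fst l)"
  shows "g (pd_scal Y l q v)
    = pd_join X q (carr Y) (\<lambda>y. pd_scal X (g (coyoneda Y y)) q (rdiv (snd l y) (fst l) * v))"
proof -
  let ?u = "\<lambda>y. rdiv (snd l y) (fst l) * v"
  have u: "?u y \<in> DQ q (mem Y y)" if "y \<in> carr Y" for y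
    by (rule DQ_comp[OF PD_carrier_DQ[OF l that] v])
  have "g (pd_scal Y l q v) = g (pd_join Y q (carr Y) (\<lambda>y. pd_scal Y (coyoneda Y y) q (?u y)))"
    by (simp only: pd_scal_eq_pd_join_coyoneda[OF Y l v])
  also have "\<dots> = pd_join X q (carr Y) (\<lambda>y. g (pd_scal Y (coyoneda Y y) q (?u y)))"
    using coyoneda_carrier[OF Y] u
    by (intro g_pd_join) (auto intro: pd_scal_carrier simp: coyoneda_simps pd_scal_simps)
  also have "\<dots> = pd_join X q (carr Y) (\<lambda>y. pd_scal X (g (coyoneda Y y)) q (?u y))"
    using u by (intro pd_join_cong) (simp add: scal_coyoneda)
  finally show ?thesis .
qed

lemma g_pd_scal_if_coyoneda:
  assumes l: "l \<in> PD_carrier Y" and v: "v \<in> DQ q (fst l)"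
  shows "g (pd_scal Y l q v) = pd_scal X (g l) q v"
proof -
  let ?m = "fst l" and ?G = "\<lambda>y. g (coyoneda Y y)"
  have G: "?G y \<in> PD_carrier X" "fst (?G y) = mem Y y" if "y \<in> carr Y" for y
    using g_carrier g_fst coyoneda_carrier[OF Y that] by (simp_all add: coyoneda_simps)
  have l_DQ: "snd l y \<in> DQ ?m (fst (?G y))" if "y \<in> carr Y" for y
    using PD_carrier_DQ[OF l that] G(2)[OF that] by simp
  have "g l = g (pd_scal Y l ?m ?m)" by (simp add: pd_scal_self[OF l])
  also have "\<dots> = pd_join X ?m (carr Y) (\<lambda>y. pd_scal X (?G y) ?m (rdiv (snd l y) ?m * ?m))"
    by (rule g_pd_scal_eq_pd_join_coyoneda[OF l DQ_refl])
  also have "\<dots> = pd_join X ?m (carr Y) (\<lambda>y. pd_scal X (?G y) ?m (snd l y))"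
    by (intro pd_join_cong) (simp add: DQ_rdiv_mult[OF PD_carrier_DQ[OF l]])
  finally have "pd_scal X (g l) q v
      = pd_scal X (pd_join X ?m (carr Y) (\<lambda>y. pd_scal X (?G y) ?m (snd l y))) q v"
    by simp
  also have "\<dots> = pd_join X q (carr Y) (\<lambda>y. pd_scal X (pd_scal X (?G y) ?m (snd l y)) q v)"
    using G l_DQ v by (intro pd_scal_pd_join) (auto intro: pd_scal_carrier simp: pd_scal_simps)
  also have "\<dots> = pd_join X q (carr Y) (\<lambda>y. pd_scal X (?G y) q (rdiv (snd l y) ?m * v))"
    using l_DQ v by (intro pd_join_cong) (simp add: pd_scal_pd_scal)
  also have "\<dots> = g (pd_scal Y l q v)"
    by (rule g_pd_scal_eq_pd_join_coyoneda[OF l v, symmetric])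
  finally show ?thesis ..
qed

end

end

theorem proposition4p16:
  fixes X :: "('a, 'q::unital_quantale) qfset" and Y :: "('b, 'q) qfset"
    and g :: "'q \<times> ('b \<Rightarrow> 'q) \<Rightarrow> 'q \<times> ('a \<Rightarrow> 'q)"
  assumes nontriv: "(bot::'q) < 1"
    and X: "qpreord X" and Y: "qpreord Y"
    and g: "qmap (PD Y) (PD X) g"
  shows "((\<exists>f. qmap (PD X) (PD Y) f \<and> qadjoint (PD X) (PD Y) f g)
           \<longleftrightarrow> ((\<exists>f. uadjoint (PD X) (PD Y) f g)
                \<and> (\<forall>l\<in>carr (PD Y). \<forall>q. \<forall>v\<in>DQ q (mem (PD Y) l).
                      g (pd_scal Y l q v) = pd_scal X (g l) q v)))
       \<and> (((\<exists>f. uadjoint (PD X) (PD Y) f g)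
                \<and> (\<forall>l\<in>carr (PD Y). \<forall>q. \<forall>v\<in>DQ q (mem (PD Y) l).
                      g (pd_scal Y l q v) = pd_scal X (g l) q v))
           \<longleftrightarrow> ((\<exists>f. uadjoint (PD X) (PD Y) f g)
                \<and> (\<forall>y\<in>carr Y. \<forall>q. \<forall>v\<in>DQ q (mem Y y).
                      g (pd_scal Y (coyoneda Y y) q v) = pd_scal X (g (coyoneda Y y)) q v)))"
proof -
  let ?scal = "\<forall>l\<in>carr (PD Y). \<forall>q. \<forall>v\<in>DQ q (mem (PD Y) l).
      g (pd_scal Y l q v) = pd_scal X (g l) q v"
  let ?scal_coyoneda = "\<forall>y\<in>carr Y. \<forall>q. \<forall>v\<in>DQ q (mem Y y).
      g (pd_scal Y (coyoneda Y y) q v) = pd_scal X (g (coyoneda Y y)) q v"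
  have "qmap (PD X) (PD Y) f \<longleftrightarrow> ?scal" and "?scal \<longleftrightarrow> ?scal_coyoneda"
    if "uadjoint (PD X) (PD Y) f g" for f
  proof -
    interpret pd_adjunction X Y f g using g that by unfold_locales
    show "qmap (PD X) (PD Y) f \<longleftrightarrow> ?scal"
      using f_qmap_if_g_pd_scal g_pd_scal_if_f_qmap by auto
    show "?scal \<longleftrightarrow> ?scal_coyoneda"
      using g_pd_scal_if_coyoneda[OF Y] coyoneda_carrier[OF Y] by (auto simp: coyoneda_simps)
  qed
  then show ?thesis using qadjoint_iff_uadjoint[OF _ g] by blast
qed

end
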